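(* Let $(M,K,\Sigma,\underline{f},V)$ and $(M',K',\Sigma',\underline{f}',V')$ be $\mathbb{Q}$SK-systems, $\xi:\mathcal{A}(K)\to\mathcal{A}(K')$ an isomorphism preserving the Blanchfield form, and $\underline b=(b_i)_{1\le i\le2g}$, $\underline b'=(b'_i)_{1\le i\le 2g}$ generating families of $\mathcal{A}(K)$, $\mathcal{A}(K')$ associated with $V$, $V'$. If $V$ and $V'$ are invertible, then $\underline b$ and $\underline b'$ are $\mathbb{Q}$-bases of $\mathcal{A}(K)$ and $\mathcal{A}(K')$, and the matrix $P$ of $\xi$ in these bases (i.e. $\xi(b_i)=\sum_kP_{ki}b'_k$) is symplectic and satisfies $V'=PVP^t$.
   Context: $\mathbb{Q}$SK-pair $(M,K)$: a rational homology 3-sphere $M$ and a knot $K$ trivial in $H_1(M;\mathbb{Z})$. $\tilde X$: the infinite cyclic covering of the exterior of $K$, deck generator $\tau$ acting as $t$; $\mathcal{A}(K)=H_1(\tilde X;\mathbb{Q})$. Blanchfield form $\phi_K([J_1],[J_2])=lk_e(J_1,J_2)\bmod\mathbb{Q}[t^{\pm1}]$, $lk_e(J_1,J_2)=\frac{1}{\delta(t)\delta(t^{-1})}\sum_k lk(\delta(\tau)J_1,\tau^k(\delta(\tau)J_2))t^k$ ($J_1\cap\tau^kJ_2=\emptyset$, $\delta$ the annihilator). Preserving: $\phi_{K'}(\xi a,\xi b)=\phi_K(a,b)$. $J$: $2g\times2g$ block-diagonal with blocks $\begin{pmatrix}0&-1\\1&0\end{pmatrix}$; $P$ symplectic means $PJP^t=J$.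 $\mathbb{Q}$SK-system $(M,K,\Sigma,\underline f,V)$: Seifert surface $\Sigma$ of genus $g$, basis $(f_i)$ of $H_1(\Sigma;\mathbb{Z})$ with intersection matrix $-J$, $V_{ij}=lk(f_i,f_j^+)$, so $V-V^t=J$. Associated generators $(b_i)$: lifts to $\tilde X$ (in one copy of $M\setminus\Sigma$) of meridians of the $f_i$; they generate $\mathcal{A}(K)$ subject to relations $\sum_i(tV-V^t)_{ij}b_i$, and $\phi_K(b_i,b_k)=(1-t)((tV-V^t)^{-1})_{ki}\bmod\mathbb{Q}[t^{\pm1}]$. *)

theory Defs
  imports Main "HOL-Computational_Algebra.Polynomial" "HOL-Computational_Algebra.Fraction_Field"
begin

(* Square matrices of size n are functions nat => nat => _ ; only indices < n matter. *)

definition Jmat :: "nat \<Rightarrow> nat \<Rightarrow> rat" where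
  "Jmat i j = (if even i \<and> j = i + 1 then -1 else if odd i \<and> i = j + 1 then 1 else 0)"

definition mat_mult :: "nat \<Rightarrow> (nat \<Rightarrow> nat \<Rightarrow> rat) \<Rightarrow> (nat \<Rightarrow> nat \<Rightarrow> rat) \<Rightarrow> nat \<Rightarrow> nat \<Rightarrow> rat" where
  "mat_mult n A B i j = (\<Sum>k<n. A i k * B k j)"

definition mat_transp :: "(nat \<Rightarrow> nat \<Rightarrow> rat) \<Rightarrow> nat \<Rightarrow> nat \<Rightarrow> rat" where
  "mat_transp A i j = A j i"

definition mat_eq :: "nat \<Rightarrow> (nat \<Rightarrow> nat \<Rightarrow> 'x) \<Rightarrow> (nat \<Rightarrow> nat \<Rightarrow> 'x) \<Rightarrow> bool" where
  "mat_eq n A B \<longleftrightarrow> (\<forall>i<n. \<forall>j<n. A i j = B i j)"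

definition mat_invertible :: "nat \<Rightarrow> (nat \<Rightarrow> nat \<Rightarrow> rat) \<Rightarrow> bool" where
  "mat_invertible n A \<longleftrightarrow> (\<exists>B. mat_eq n (mat_mult n A B) (\<lambda>i j. if i = j then 1 else 0)
                                 \<and> mat_eq n (mat_mult n B A) (\<lambda>i j. if i = j then 1 else 0))"

definition symplectic :: "nat \<Rightarrow> (nat \<Rightarrow> nat \<Rightarrow> rat) \<Rightarrow> bool" where
  "symplectic g P \<longleftrightarrow> mat_eq (2*g) (mat_mult (2*g) (mat_mult (2*g) P Jmat) (mat_transp P)) Jmat"

definition seifert_matrix :: "nat \<Rightarrow> (nat \<Rightarrow> nat \<Rightarrow> rat) \<Rightarrow> bool" where
  "seifert_matrix g V \<longleftrightarrow> (\<forall>i<2*g. \<forall>j<2*g. V i j - V j i = Jmat i j)"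

definition pf :: "rat poly \<Rightarrow> rat poly fract" where
  "pf p = Fract p 1"

definition tvar :: "rat poly fract" where
  "tvar = pf [:0, 1:]"

definition tinv :: "rat poly fract" where
  "tinv = Fract 1 [:0, 1:]"

(* congruence modulo Q[t^{\<plusminus>1}] inside Q(t) *)
definition laurent :: "rat poly fract \<Rightarrow> bool" where
  "laurent x \<longleftrightarrow> (\<exists>p k. x = Fract p (monom 1 k))"

definition mod_laurent :: "rat poly fract \<Rightarrow> rat poly fract \<Rightarrow> bool" where
  "mod_laurent x y \<longleftrightarrow> laurent (x - y)"

definition pres_mat :: "(nat \<Rightarrow> nat \<Rightarrow> rat) \<Rightarrow> nat \<Rightarrow> nat \<Rightarrow> rat poly" where
  "pres_mat V i j = [: - V j i, V i j :]"

definition poly_act :: "(rat \<Rightarrow> 'a::ab_group_add \<Rightarrow> 'a) \<Rightarrow> ('a \<Rightarrow> 'a) \<Rightarrow> rat poly \<Rightarrow> 'a \<Rightarrow> 'a" where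
  "poly_act sc tau p x = (\<Sum>k\<le>degree p. sc (coeff p k) ((tau ^^ k) x))"

(* A Q[t^{\<plusminus>1}]-module: a Q-vector space with an invertible Q-linear operator tau (action of t) *)
definition laurent_module :: "(rat \<Rightarrow> 'a::ab_group_add \<Rightarrow> 'a) \<Rightarrow> ('a \<Rightarrow> 'a) \<Rightarrow> bool" where
  "laurent_module sc tau \<longleftrightarrow> vector_space sc \<and> Vector_Spaces.linear sc sc tau \<and> bij tau"

(* Blanchfield-type form: values in Q(t)/Q[t^{\<plusminus>1}] represented by representatives in Q(t);
   Q-bilinear and sesquilinear (phi(tau a,b) = t phi(a,b), phi(a, tau b) = t^{-1} phi(a,b)),
   all modulo Q[t^{\<plusminus>1}] *)
definition blanchfield_type_form ::
  "(rat \<Rightarrow> 'a::ab_group_add \<Rightarrow> 'a) \<Rightarrow> ('a \<Rightarrow> 'a) \<Rightarrow> ('a \<Rightarrow> 'a \<Rightarrow> rat poly fract) \<Rightarrow> bool" where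
  "blanchfield_type_form sc tau phi \<longleftrightarrow>
     (\<forall>x y z. mod_laurent (phi (x + y) z) (phi x z + phi y z)) \<and>
     (\<forall>x y z. mod_laurent (phi z (x + y)) (phi z x + phi z y)) \<and>
     (\<forall>c x y. mod_laurent (phi (sc c x) y) (pf [:c:] * phi x y)) \<and>
     (\<forall>c x y. mod_laurent (phi x (sc c y)) (pf [:c:] * phi x y)) \<and>
     (\<forall>x y. mod_laurent (phi (tau x) y) (tvar * phi x y)) \<and>
     (\<forall>x y. mod_laurent (phi x (tau y)) (tinv * phi x y))"

(* (b_i)_{i<2g} is a generating family associated with the Seifert matrix V:
   - the b_i generate the module over Q[t^{\<plusminus>1}],
   - they satisfy the relations  sum_i (tV - V^t)_{ij} b_i = 0,
   - these relations generate all relations (presentation),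
   - phi(b_i,b_k) = (1-t) ((tV - V^t)^{-1})_{ki}  mod Q[t^{\<plusminus>1}]. *)
definition assoc_generators ::
  "nat \<Rightarrow> (nat \<Rightarrow> nat \<Rightarrow> rat) \<Rightarrow> (rat \<Rightarrow> 'a::ab_group_add \<Rightarrow> 'a) \<Rightarrow> ('a \<Rightarrow> 'a)
     \<Rightarrow> ('a \<Rightarrow> 'a \<Rightarrow> rat poly fract) \<Rightarrow> (nat \<Rightarrow> 'a) \<Rightarrow> bool" where
  "assoc_generators g V sc tau phi b \<longleftrightarrow>
     module.span sc ({(tau ^^ k) (b i) | k i. i < 2*g} \<union> {(inv tau ^^ k) (b i) | k i. i < 2*g})
       = UNIV \<and>
     (\<forall>j<2*g. (\<Sum>i<2*g. poly_act sc tau (pres_mat V i j) (b i)) = 0) \<and>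
     (\<forall>p :: nat \<Rightarrow> rat poly. (\<Sum>i<2*g. poly_act sc tau (p i) (b i)) = 0 \<longrightarrow>
        (\<exists>(q :: nat \<Rightarrow> rat poly) k. \<forall>i<2*g. monom 1 k * p i = (\<Sum>j<2*g. q j * pres_mat V i j))) \<and>
     (\<exists>W :: nat \<Rightarrow> nat \<Rightarrow> rat poly fract.
        (\<forall>i<2*g. \<forall>j<2*g. (\<Sum>k<2*g. W i k * pf (pres_mat V k j)) = (if i = j then 1 else 0)) \<and>
        (\<forall>i<2*g. \<forall>j<2*g. (\<Sum>k<2*g. pf (pres_mat V i k) * W k j) = (if i = j then 1 else 0)) \<and>
        (\<forall>i<2*g. \<forall>k<2*g. mod_laurent (phi (b i) (b k)) (pf [:1, -1:] * W k i)))"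

definition is_family_basis :: "nat \<Rightarrow> (rat \<Rightarrow> 'a::ab_group_add \<Rightarrow> 'a) \<Rightarrow> (nat \<Rightarrow> 'a) \<Rightarrow> bool" where
  "is_family_basis n sc b \<longleftrightarrow> inj_on b {..<n} \<and> \<not> module.dependent sc (b ` {..<n})
     \<and> module.span sc (b ` {..<n}) = UNIV"

end

theory Submission
  imports Defs
begin

(* Write M = tV - V^T and M' = tV' - V'^T. Since V is invertible, both coefficients of M are
   invertible, so the relations express tau(b_i) and tau^-1(b_i) rationally in the b_i, and a
   rational relation t^k c = M q forces q = 0 by comparing lowest and highest coefficients: the b_i
   form a basis, and likewise the b'_i.
   Let P be the matrix of xi and Q = P^-1. Preservation of the Blanchfield form says that
   (1 - t)(M^-T - P^T M'^-T P) has Laurent polynomial entries; clearing a power t^K and multiplying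
   by M^T on the left and Q M'^T on the right gives, for a polynomial matrix X,
       t^K (1 - t) (Q M'^T - M^T P^T) = M^T X M'^T.
   The left hand side has degree at most K + 2 and order at least K, so again by comparing extreme
   coefficients X = t^K X_K. At t = 1 the left hand side vanishes while M(1) = V - V^T = J is
   invertible, so X_K = 0. Hence Q M'^T = M^T P^T, whose constant term is Q V' = V P^T, i.e.
   V' = P V P^T, and subtracting the transpose turns V - V^T = J into P J P^T = J. *)

section \<open>Laurent polynomials inside \<open>\<rat>(t)\<close>\<close>

lemma pf_add: "pf (p + q) = pf p + pf q" by (simp add: pf_def)
lemma pf_diff: "pf (p - q) = pf p - pf q" by (simp add: pf_def)
lemma pf_mult: "pf (p * q) = pf p * pf q" by (simp add: pf_def)
lemma pf_0: "pf 0 = 0" by (simp add: pf_def fract_collapse)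
lemma pf_1: "pf 1 = 1" by (simp add: pf_def fract_collapse)
lemma pf_inject: "pf p = pf q \<longleftrightarrow> p = q" by (simp add: pf_def eq_fract)

lemma laurent_0: "laurent 0"
  unfolding laurent_def by (rule exI[of _ 0], rule exI[of _ 0]) (simp add: fract_collapse)

lemma laurent_add:
  assumes "laurent x" "laurent y"
  shows "laurent (x + y)"
proof -
  obtain p k q l where x: "x = Fract p (monom 1 k)" and y: "y = Fract q (monom 1 l)"
    using assms unfolding laurent_def by blast
  have "x + y = Fract (p * monom 1 l + q * monom 1 k) (monom 1 (k + l))"
    by (simp add: x y mult_monom)
  then show ?thesis unfolding laurent_def by blast
qed

lemma laurent_uminus:
  assumes "laurent x"
  shows "laurent (- x)"
proof -
  obtain p k where "x = Fract p (monom 1 k)" using assms unfolding laurent_def by blast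
  then have "- x = Fract (- p) (monom 1 k)" by simp
  then show ?thesis unfolding laurent_def by blast
qed

lemma laurent_mult_pf:
  assumes "laurent x"
  shows "laurent (pf q * x)"
proof -
  obtain p k where "x = Fract p (monom 1 k)" using assms unfolding laurent_def by blast
  then have "pf q * x = Fract (q * p) (monom 1 k)" by (simp add: pf_def)
  then show ?thesis unfolding laurent_def by blast
qed

lemma mod_laurent_refl: "mod_laurent x x"
  by (simp add: mod_laurent_def laurent_0)

lemma mod_laurent_sym: "mod_laurent x y \<Longrightarrow> mod_laurent y x"
  unfolding mod_laurent_def using laurent_uminus by fastforce

lemma mod_laurent_trans [trans]: "mod_laurent x y \<Longrightarrow> mod_laurent y z \<Longrightarrow> mod_laurent x z"
  unfolding mod_laurent_def using laurent_add by fastforce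

lemma mod_laurent_add:
  "mod_laurent x y \<Longrightarrow> mod_laurent x' y' \<Longrightarrow> mod_laurent (x + x') (y + y')"
  unfolding mod_laurent_def using laurent_add by (fastforce simp: algebra_simps)

lemma mod_laurent_mult_pf: "mod_laurent x y \<Longrightarrow> mod_laurent (pf q * x) (pf q * y)"
  unfolding mod_laurent_def using laurent_mult_pf by (fastforce simp: algebra_simps)

lemma mod_laurent_sum:
  "(\<And>x. x \<in> A \<Longrightarrow> mod_laurent (f x) (h x)) \<Longrightarrow> mod_laurent (\<Sum>x\<in>A. f x) (\<Sum>x\<in>A. h x)"
  by (induction A rule: infinite_finite_induct) (auto simp: mod_laurent_refl mod_laurent_add)

lemma laurent_common_denominator:
  fixes n :: nat
  assumes "\<And>i k. i < n \<Longrightarrow> k < n \<Longrightarrow> laurent (G i k)"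
  shows "\<exists>K L. \<forall>i<n. \<forall>k<n. pf (monom 1 K) * G i k = pf (L i k)"
proof -
  obtain p e where pe: "\<And>i k. i < n \<Longrightarrow> k < n \<Longrightarrow> G i k = Fract (p i k) (monom 1 (e i k))"
    using assms unfolding laurent_def by metis
  define K where "K = (\<Sum>i<n. \<Sum>k<n. e i k)"
  have e_le_K: "e i k \<le> K" if "i < n" "k < n" for i k
  proof -
    have "e i k \<le> (\<Sum>k<n. e i k)" using that by (intro member_le_sum) auto
    also have "\<dots> \<le> K" unfolding K_def using that
      by (intro member_le_sum[where f = "\<lambda>i. \<Sum>k<n. e i k"]) auto
    finally show ?thesis .
  qed
  have "pf (monom 1 K) * G i k = pf (p i k * monom 1 (K - e i k))" if ik: "i < n" "k < n" for i k
  proof -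
    have "monom (1::rat) K = monom 1 (K - e i k) * monom 1 (e i k)"
      using e_le_K[OF ik] by (simp add: mult_monom)
    then show ?thesis unfolding pe[OF ik] pf_def by (simp add: eq_fract algebra_simps)
  qed
  then show ?thesis by (intro exI[of _ K] exI[of _ "\<lambda>i k. p i k * monom 1 (K - e i k)"]) blast
qed

section \<open>Square matrices over a commutative ring\<close>

(* mat_mult and mat_transp of Defs are specialised to rat; the argument also needs matrices
   over rat poly and rat poly fract. *)

definition mat_mul :: "nat \<Rightarrow> (nat \<Rightarrow> nat \<Rightarrow> 'r::comm_ring_1) \<Rightarrow> (nat \<Rightarrow> nat \<Rightarrow> 'r) \<Rightarrow> nat \<Rightarrow> nat \<Rightarrow> 'r"
  where "mat_mul n A B = (\<lambda>i j. \<Sum>k<n. A i k * B k j)"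

definition mat_transpose :: "(nat \<Rightarrow> nat \<Rightarrow> 'r) \<Rightarrow> nat \<Rightarrow> nat \<Rightarrow> 'r"
  where "mat_transpose A = (\<lambda>i j. A j i)"

definition mat_one :: "nat \<Rightarrow> nat \<Rightarrow> 'r::comm_ring_1"
  where "mat_one = (\<lambda>i j. if i = j then 1 else 0)"

definition map_mat :: "('r \<Rightarrow> 's) \<Rightarrow> (nat \<Rightarrow> nat \<Rightarrow> 'r) \<Rightarrow> nat \<Rightarrow> nat \<Rightarrow> 's"
  where "map_mat f A = (\<lambda>i j. f (A i j))"

definition inverse_mats :: "nat \<Rightarrow> (nat \<Rightarrow> nat \<Rightarrow> 'r::comm_ring_1) \<Rightarrow> (nat \<Rightarrow> nat \<Rightarrow> 'r) \<Rightarrow> bool"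
  where "inverse_mats n A B \<longleftrightarrow> mat_eq n (mat_mul n A B) mat_one \<and> mat_eq n (mat_mul n B A) mat_one"

lemma mat_mult_eq_mat_mul: "mat_mult n A B = mat_mul n A B"
  by (intro ext) (simp add: mat_mult_def mat_mul_def)

lemma mat_transp_eq_mat_transpose: "mat_transp A = mat_transpose A"
  by (intro ext) (simp add: mat_transp_def mat_transpose_def)

lemma mat_invertible_iff_inverse_mats: "mat_invertible n A \<longleftrightarrow> (\<exists>B. inverse_mats n A B)"
  by (simp add: mat_invertible_def inverse_mats_def mat_mult_eq_mat_mul mat_one_def)

lemma mat_mul_assoc: "mat_mul n (mat_mul n A B) C = mat_mul n A (mat_mul n B C)"
  unfolding mat_mul_def
  by (intro ext) (simp add: sum_distrib_left sum_distrib_right mult.assoc, rule sum.swap)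

lemma mat_transpose_mat_mul:
  "mat_transpose (mat_mul n A B) = mat_mul n (mat_transpose B) (mat_transpose A)"
  unfolding mat_mul_def mat_transpose_def by (intro ext) (simp add: mult.commute)

lemma mat_transpose_transpose [simp]: "mat_transpose (mat_transpose A) = A"
  unfolding mat_transpose_def by simp

lemma mat_transpose_one [simp]: "mat_transpose mat_one = mat_one"
  unfolding mat_transpose_def mat_one_def by (intro ext) auto

lemma mat_mul_diff_left:
  "mat_mul n (\<lambda>i j. A i j - B i j) C = (\<lambda>i j. mat_mul n A C i j - mat_mul n B C i j)"
  unfolding mat_mul_def by (simp add: algebra_simps sum_subtractf)

lemma mat_mul_diff_right:
  "mat_mul n C (\<lambda>i j. A i j - B i j) = (\<lambda>i j. mat_mul n C A i j - mat_mul n C B i j)"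
  unfolding mat_mul_def by (simp add: algebra_simps sum_subtractf)

lemma mat_mul_uminus_left: "mat_mul n (\<lambda>i j. - A i j) B = (\<lambda>i j. - mat_mul n A B i j)"
  unfolding mat_mul_def by (simp add: sum_negf)

lemma mat_mul_uminus_right: "mat_mul n A (\<lambda>i j. - B i j) = (\<lambda>i j. - mat_mul n A B i j)"
  unfolding mat_mul_def by (simp add: sum_negf)

lemma mat_mul_scale_left: "mat_mul n (\<lambda>i j. c * A i j) B = (\<lambda>i j. c * mat_mul n A B i j)"
  unfolding mat_mul_def by (simp add: algebra_simps sum_distrib_left)

lemma mat_mul_scale_right: "mat_mul n A (\<lambda>i j. c * B i j) = (\<lambda>i j. c * mat_mul n A B i j)"
  unfolding mat_mul_def by (simp add: algebra_simps sum_distrib_left)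

lemma mat_mul_zero_left [simp]: "mat_mul n (\<lambda>_ _. 0) B = (\<lambda>_ _. 0)"
  unfolding mat_mul_def by simp

lemma mat_mul_zero_right [simp]: "mat_mul n A (\<lambda>_ _. 0) = (\<lambda>_ _. 0)"
  unfolding mat_mul_def by simp

lemma map_mat_mat_mul:
  assumes "\<And>x y. f (x + y) = f x + f y" "\<And>x y. f (x * y) = f x * f y" "f 0 = 0"
  shows "map_mat f (mat_mul n A B) = mat_mul n (map_mat f A) (map_mat f B)"
proof -
  have "f (sum h S) = (\<Sum>x\<in>S. f (h x))" for h and S :: "nat set"
    by (induction S rule: infinite_finite_induct) (auto simp: assms)
  then show ?thesis unfolding mat_mul_def map_mat_def by (simp add: assms)
qed

lemma mat_eq_refl [simp]: "mat_eq n A A"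
  by (simp add: mat_eq_def)

lemma mat_eq_sym: "mat_eq n A B \<Longrightarrow> mat_eq n B A"
  by (simp add: mat_eq_def)

lemma mat_eq_trans [trans]: "mat_eq n A B \<Longrightarrow> mat_eq n B C \<Longrightarrow> mat_eq n A C"
  by (simp add: mat_eq_def)

lemma mat_eq_trans_eq [trans]: "mat_eq n A B \<Longrightarrow> B = C \<Longrightarrow> mat_eq n A C"
  by simp

lemma eq_mat_eq_trans [trans]: "A = B \<Longrightarrow> mat_eq n B C \<Longrightarrow> mat_eq n A C"
  by simp

lemma mat_eq_mat_mul:
  "mat_eq n A A' \<Longrightarrow> mat_eq n B B' \<Longrightarrow> mat_eq n (mat_mul n A B) (mat_mul n A' B')"
  unfolding mat_eq_def mat_mul_def by (auto intro!: sum.cong)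

lemma mat_eq_transpose: "mat_eq n A B \<Longrightarrow> mat_eq n (mat_transpose A) (mat_transpose B)"
  unfolding mat_eq_def mat_transpose_def by auto

lemma mat_eq_mat_mul_zero_left:
  "mat_eq n A (\<lambda>_ _. 0) \<Longrightarrow> mat_eq n (mat_mul n A B) (\<lambda>_ _. 0)"
  using mat_eq_mat_mul[of n A "\<lambda>_ _. 0" B B] by simp

lemma mat_eq_mat_mul_zero_right:
  "mat_eq n B (\<lambda>_ _. 0) \<Longrightarrow> mat_eq n (mat_mul n A B) (\<lambda>_ _. 0)"
  using mat_eq_mat_mul[of n A A B "\<lambda>_ _. 0"] by simp

lemma mat_mul_one_left: "mat_eq n (mat_mul n mat_one A) A"
  unfolding mat_eq_def mat_mul_def mat_one_def by (simp add: if_distrib[of "\<lambda>x. x * _"] cong: if_cong)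

lemma mat_mul_one_right: "mat_eq n (mat_mul n A mat_one) A"
  unfolding mat_eq_def mat_mul_def mat_one_def by (simp add: if_distrib[of "\<lambda>x. _ * x"] cong: if_cong)

lemma mat_eq_zero_of_left_inverse:
  assumes "mat_eq n (mat_mul n B A) mat_one" "mat_eq n (mat_mul n A X) (\<lambda>_ _. 0)"
  shows "mat_eq n X (\<lambda>_ _. 0)"
proof -
  have "mat_eq n X (mat_mul n mat_one X)" by (rule mat_eq_sym[OF mat_mul_one_left])
  also have "mat_eq n \<dots> (mat_mul n (mat_mul n B A) X)"
    by (rule mat_eq_mat_mul[OF mat_eq_sym[OF assms(1)] mat_eq_refl])
  also have "\<dots> = mat_mul n B (mat_mul n A X)" by (rule mat_mul_assoc)
  also have "mat_eq n \<dots> (\<lambda>_ _. 0)" by (rule mat_eq_mat_mul_zero_right[OF assms(2)])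
  finally show ?thesis .
qed

lemma mat_eq_zero_of_right_inverse:
  assumes "mat_eq n (mat_mul n A B) mat_one" "mat_eq n (mat_mul n X A) (\<lambda>_ _. 0)"
  shows "mat_eq n X (\<lambda>_ _. 0)"
proof -
  have "mat_eq n X (mat_mul n X mat_one)" by (rule mat_eq_sym[OF mat_mul_one_right])
  also have "mat_eq n \<dots> (mat_mul n X (mat_mul n A B))"
    by (rule mat_eq_mat_mul[OF mat_eq_refl mat_eq_sym[OF assms(1)]])
  also have "\<dots> = mat_mul n (mat_mul n X A) B" by (rule mat_mul_assoc[symmetric])
  also have "mat_eq n \<dots> (\<lambda>_ _. 0)" by (rule mat_eq_mat_mul_zero_left[OF assms(2)])
  finally show ?thesis .
qed

lemma inverse_mats_transpose:
  "inverse_mats n A B \<Longrightarrow> inverse_mats n (mat_transpose A) (mat_transpose B)"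
  unfolding inverse_mats_def using mat_eq_transpose by (fastforce simp: mat_transpose_mat_mul)

lemma inverse_mats_uminus:
  "inverse_mats n A B \<Longrightarrow> inverse_mats n (\<lambda>i j. - A i j) (\<lambda>i j. - B i j)"
  unfolding inverse_mats_def by (simp add: mat_mul_uminus_left mat_mul_uminus_right)

section \<open>Polynomial matrices\<close>

definition coeff_mat :: "(nat \<Rightarrow> nat \<Rightarrow> 'r::zero poly) \<Rightarrow> nat \<Rightarrow> nat \<Rightarrow> nat \<Rightarrow> 'r"
  where "coeff_mat X m = (\<lambda>i j. coeff (X i j) m)"

definition lin_mat :: "(nat \<Rightarrow> nat \<Rightarrow> 'r::zero) \<Rightarrow> (nat \<Rightarrow> nat \<Rightarrow> 'r) \<Rightarrow> nat \<Rightarrow> nat \<Rightarrow> 'r poly"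
  where "lin_mat A0 A1 = (\<lambda>i j. [:A0 i j, A1 i j:])"

lemma coeff_mult_linear:
  "coeff (p * [:a, b:]) m = a * coeff p m + (if m = 0 then 0 else b * coeff p (m - 1))"
proof -
  have "p * [:a, b:] = smult a p + pCons 0 (smult b p)"
    by (simp add: mult.commute[of p] mult_pCons_left)
  then show ?thesis by (cases m) (auto simp: coeff_pCons)
qed

lemma coeff_mat_lin_mat_mul:
  "coeff_mat (mat_mul n (lin_mat A0 A1) X) m =
     (\<lambda>i j. mat_mul n A0 (coeff_mat X m) i j + (if m = 0 then 0 else mat_mul n A1 (coeff_mat X (m - 1)) i j))"
proof (intro ext)
  fix i j
  have "coeff (lin_mat A0 A1 i k * X k j) m =
      A0 i k * coeff (X k j) m + (if m = 0 then 0 else A1 i k * coeff (X k j) (m - 1))" for k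
    unfolding lin_mat_def by (simp only: mult.commute[of "[:_, _:]"] coeff_mult_linear)
  then show "coeff_mat (mat_mul n (lin_mat A0 A1) X) m i j =
      mat_mul n A0 (coeff_mat X m) i j + (if m = 0 then 0 else mat_mul n A1 (coeff_mat X (m - 1)) i j)"
    by (simp add: coeff_mat_def mat_mul_def coeff_sum sum.distrib)
qed

lemma coeff_mat_mat_mul_lin_mat:
  "coeff_mat (mat_mul n X (lin_mat A0 A1)) m =
     (\<lambda>i j. mat_mul n (coeff_mat X m) A0 i j + (if m = 0 then 0 else mat_mul n (coeff_mat X (m - 1)) A1 i j))"
proof (intro ext)
  fix i j
  have "coeff (X i k * lin_mat A0 A1 k j) m =
      coeff (X i k) m * A0 k j + (if m = 0 then 0 else coeff (X i k) (m - 1) * A1 k j)" for k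
    unfolding lin_mat_def by (simp only: coeff_mult_linear) (simp add: mult.commute)
  then show "coeff_mat (mat_mul n X (lin_mat A0 A1)) m i j =
      mat_mul n (coeff_mat X m) A0 i j + (if m = 0 then 0 else mat_mul n (coeff_mat X (m - 1)) A1 i j)"
    by (simp add: coeff_mat_def mat_mul_def coeff_sum sum.distrib)
qed

lemma coeff_mat_beyond_degree:
  assumes "(\<Sum>i<n. \<Sum>j<n. degree (X i j)) < m"
  shows "mat_eq n (coeff_mat X m) (\<lambda>_ _. 0)"
  unfolding mat_eq_def coeff_mat_def
proof (intro allI impI coeff_eq_0)
  fix i j assume ij: "i < n" "j < n"
  have "degree (X i j) \<le> (\<Sum>j<n. degree (X i j))" using ij by (intro member_le_sum) auto
  also have "\<dots> \<le> (\<Sum>i<n. \<Sum>j<n. degree (X i j))" using ij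
    by (intro member_le_sum[where f = "\<lambda>i. \<Sum>j<n. degree (X i j)"]) auto
  finally show "degree (X i j) < m" using assms by simp
qed

lemma outside_interval_induct:
  fixes P :: "nat \<Rightarrow> bool"
  assumes large: "\<And>m. N \<le> m \<Longrightarrow> P m"
    and down: "\<And>m. hi < m \<Longrightarrow> P m \<Longrightarrow> P (m - 1)"
    and up: "\<And>m. m < lo \<Longrightarrow> m = 0 \<or> P (m - 1) \<Longrightarrow> P m"
    and m: "m < lo \<or> hi \<le> m"
  shows "P m"
proof -
  have above: "P m" if "hi \<le> m" "N \<le> m + d" for m d
    using that
  proof (induction d arbitrary: m)
    case 0 then show ?case using large by simp
  next
    case (Suc d)
    show ?case
    proof (cases "N \<le> m + d")
      case True then show ?thesis using Suc by blast
    next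
      case False
      then have "P (Suc m)" using Suc by simp
      then show ?thesis using down[of "Suc m"] Suc.prems by simp
    qed
  qed
  have below: "P m" if "m < lo" for m
    using that by (induction m) (auto intro: up)
  show ?thesis using m above[of m N] below by auto
qed

text \<open>If the constant and the linear coefficient of \<open>A = A\<^sub>0 + t A\<^sub>1\<close> are invertible, a
  polynomial matrix \<open>X\<close> can only have nonzero coefficients in degrees where \<open>A X\<close> has some:
  compare lowest coefficients from below and highest ones from above.\<close>

lemma coeff_mat_support_left:
  assumes inv0: "mat_eq n (mat_mul n B0 A0) mat_one" and inv1: "mat_eq n (mat_mul n B1 A1) mat_one"
    and AX: "\<And>m. m < lo \<or> hi < m \<Longrightarrow> mat_eq n (coeff_mat (mat_mul n (lin_mat A0 A1) X) m) (\<lambda>_ _. 0)"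
    and m: "m < lo \<or> hi \<le> m"
  shows "mat_eq n (coeff_mat X m) (\<lambda>_ _. 0)"
proof (rule outside_interval_induct[where N = "Suc (\<Sum>i<n. \<Sum>j<n. degree (X i j))", OF _ _ _ m])
  fix m assume "Suc (\<Sum>i<n. \<Sum>j<n. degree (X i j)) \<le> m"
  then show "mat_eq n (coeff_mat X m) (\<lambda>_ _. 0)" by (intro coeff_mat_beyond_degree) simp
next
  fix m assume m: "hi < m" and Xm: "mat_eq n (coeff_mat X m) (\<lambda>_ _. 0)"
  have "mat_eq n (mat_mul n A1 (coeff_mat X (m - 1))) (\<lambda>_ _. 0)"
    using AX[of m] m mat_eq_mat_mul_zero_right[OF Xm, of A0]
    by (auto simp: coeff_mat_lin_mat_mul mat_eq_def)
  then show "mat_eq n (coeff_mat X (m - 1)) (\<lambda>_ _. 0)" by (rule mat_eq_zero_of_left_inverse[OF inv1])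
next
  fix m assume m: "m < lo" and prev: "m = 0 \<or> mat_eq n (coeff_mat X (m - 1)) (\<lambda>_ _. 0)"
  have "mat_eq n (mat_mul n A0 (coeff_mat X m)) (\<lambda>_ _. 0)"
  proof (cases "m = 0")
    case True then show ?thesis using AX[of m] m by (auto simp: coeff_mat_lin_mat_mul mat_eq_def)
  next
    case False
    then show ?thesis
      using AX[of m] m mat_eq_mat_mul_zero_right[of n "coeff_mat X (m - 1)" A1] prev
      by (auto simp: coeff_mat_lin_mat_mul mat_eq_def)
  qed
  then show "mat_eq n (coeff_mat X m) (\<lambda>_ _. 0)" by (rule mat_eq_zero_of_left_inverse[OF inv0])
qed

lemma coeff_mat_support_right:
  assumes inv0: "mat_eq n (mat_mul n A0 B0) mat_one" and inv1: "mat_eq n (mat_mul n A1 B1) mat_one"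
    and XA: "\<And>m. m < lo \<or> hi < m \<Longrightarrow> mat_eq n (coeff_mat (mat_mul n X (lin_mat A0 A1)) m) (\<lambda>_ _. 0)"
    and m: "m < lo \<or> hi \<le> m"
  shows "mat_eq n (coeff_mat X m) (\<lambda>_ _. 0)"
proof (rule outside_interval_induct[where N = "Suc (\<Sum>i<n. \<Sum>j<n. degree (X i j))", OF _ _ _ m])
  fix m assume "Suc (\<Sum>i<n. \<Sum>j<n. degree (X i j)) \<le> m"
  then show "mat_eq n (coeff_mat X m) (\<lambda>_ _. 0)" by (intro coeff_mat_beyond_degree) simp
next
  fix m assume m: "hi < m" and Xm: "mat_eq n (coeff_mat X m) (\<lambda>_ _. 0)"
  have "mat_eq n (mat_mul n (coeff_mat X (m - 1)) A1) (\<lambda>_ _. 0)"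
    using XA[of m] m mat_eq_mat_mul_zero_left[OF Xm, of A0]
    by (auto simp: coeff_mat_mat_mul_lin_mat mat_eq_def)
  then show "mat_eq n (coeff_mat X (m - 1)) (\<lambda>_ _. 0)" by (rule mat_eq_zero_of_right_inverse[OF inv1])
next
  fix m assume m: "m < lo" and prev: "m = 0 \<or> mat_eq n (coeff_mat X (m - 1)) (\<lambda>_ _. 0)"
  have "mat_eq n (mat_mul n (coeff_mat X m) A0) (\<lambda>_ _. 0)"
  proof (cases "m = 0")
    case True then show ?thesis using XA[of m] m by (auto simp: coeff_mat_mat_mul_lin_mat mat_eq_def)
  next
    case False
    then show ?thesis
      using XA[of m] m mat_eq_mat_mul_zero_left[of n "coeff_mat X (m - 1)" A1] prev
      by (auto simp: coeff_mat_mat_mul_lin_mat mat_eq_def)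
  qed
  then show "mat_eq n (coeff_mat X m) (\<lambda>_ _. 0)" by (rule mat_eq_zero_of_right_inverse[OF inv0])
qed

lemma map_mat_poly_mat_mul:
  "map_mat (\<lambda>p. poly p x) (mat_mul n A B) = mat_mul n (map_mat (\<lambda>p. poly p x) A) (map_mat (\<lambda>p. poly p x) B)"
  by (rule map_mat_mat_mul) auto

lemma degree_mat_mul_le:
  assumes "\<And>i k. degree (A i k) \<le> a" "\<And>k j. degree (B k j) \<le> b"
  shows "degree (mat_mul n A B i j) \<le> a + b"
  unfolding mat_mul_def
  by (intro degree_sum_le order.trans[OF degree_mult_le] add_mono assms) simp

lemma poly_mat_zero_of_factorisation:
  fixes V V' B B' Jl Jr :: "nat \<Rightarrow> nat \<Rightarrow> 'r::idom" and X r :: "nat \<Rightarrow> nat \<Rightarrow> 'r poly"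
  assumes V: "inverse_mats n V B" and V': "inverse_mats n V' B'"
    and D: "inverse_mats n (\<lambda>i j. V i j - V j i) Jl" and D': "inverse_mats n (\<lambda>i j. V' i j - V' j i) Jr"
    and deg: "\<And>i j. i < n \<Longrightarrow> j < n \<Longrightarrow> degree (r i j) \<le> 1"
    and factorisation: "\<And>i j. i < n \<Longrightarrow> j < n \<Longrightarrow> monom 1 K * ([:1, -1:] * r i j) =
       mat_mul n (mat_mul n (lin_mat (\<lambda>i j. - V i j) (mat_transpose V)) X)
         (lin_mat (\<lambda>i j. - V' i j) (mat_transpose V')) i j"
    and ij: "i < n" "j < n"
  shows "r i j = 0"
proof -
  define M where "M = lin_mat (\<lambda>i j. - V i j) (mat_transpose V)"
  define M' where "M' = lin_mat (\<lambda>i j. - V' i j) (mat_transpose V')"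
  have Z_support: "mat_eq n (coeff_mat (mat_mul n (mat_mul n M X) M') m) (\<lambda>_ _. 0)"
    if "m < K \<or> K + 2 < m" for m
    unfolding mat_eq_def coeff_mat_def
  proof (intro allI impI)
    fix u v assume uv: "u < n" "v < n"
    have "coeff (monom (1::'r) K * ([:1, -1:] * r u v)) m = 0"
    proof (cases "m < K")
      case True then show ?thesis by (simp add: coeff_monom_mult)
    next
      case False
      have "degree (monom (1::'r) K * ([:1, -1:] * r u v)) \<le> K + (1 + 1)"
        by (intro order.trans[OF degree_mult_le] add_mono) (use deg[OF uv] in \<open>auto simp: degree_monom_eq\<close>)
      then show ?thesis using False that by (intro coeff_eq_0) simp
    qed
    then show "coeff (mat_mul n (mat_mul n M X) M' u v) m = 0"
      using factorisation[OF uv, folded M_def M'_def] by simp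
  qed
  have Y_support: "mat_eq n (coeff_mat (mat_mul n M X) m) (\<lambda>_ _. 0)" if "m < K \<or> K + 2 \<le> m" for m
  proof (rule coeff_mat_support_right[where lo = K and hi = "K + 2"])
    show "mat_eq n (mat_mul n (\<lambda>i j. - V' i j) (\<lambda>i j. - B' i j)) mat_one"
      using inverse_mats_uminus[OF V'] unfolding inverse_mats_def by blast
    show "mat_eq n (mat_mul n (mat_transpose V') (mat_transpose B')) mat_one"
      using inverse_mats_transpose[OF V'] unfolding inverse_mats_def by blast
  qed (use Z_support that in \<open>simp_all add: M'_def\<close>)
  have X_support: "mat_eq n (coeff_mat X m) (\<lambda>_ _. 0)" if "m \<noteq> K" for m
  proof (rule coeff_mat_support_left[where lo = K and hi = "K + 1"])
    show "mat_eq n (mat_mul n (\<lambda>i j. - B i j) (\<lambda>i j. - V i j)) mat_one"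
      using inverse_mats_uminus[OF V] unfolding inverse_mats_def by blast
    show "mat_eq n (mat_mul n (mat_transpose B) (mat_transpose V)) mat_one"
      using inverse_mats_transpose[OF V] unfolding inverse_mats_def by blast
  qed (use Y_support that in \<open>auto simp: M_def\<close>)
  have X_monom: "X u v = monom (poly (X u v) 1) K" if "u < n" "v < n" for u v
  proof -
    have "X u v = monom (coeff (X u v) K) K"
      by (rule poly_eqI) (use X_support that in \<open>auto simp: coeff_monom mat_eq_def coeff_mat_def\<close>)
    moreover have "poly (monom c K) 1 = c" for c :: 'r by (simp add: poly_monom)
    ultimately show ?thesis by metis
  qed
  txt \<open>At \<open>t = 1\<close> the factor \<open>1 - t\<close> kills the left hand side, while \<open>M(1) = V\<^sup>T - V\<close> is invertible.\<close>
  have "mat_eq n (map_mat (\<lambda>p. poly p 1) X) (\<lambda>_ _. 0)"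
  proof -
    let ?D = "\<lambda>i j. V i j - V j i" and ?D' = "\<lambda>i j. V' i j - V' j i"
    have M1: "map_mat (\<lambda>p. poly p 1) M = (\<lambda>i j. - ?D i j)"
      and M'1: "map_mat (\<lambda>p. poly p 1) M' = (\<lambda>i j. - ?D' i j)"
      by (auto simp: M_def M'_def lin_mat_def map_mat_def mat_transpose_def)
    have "map_mat (\<lambda>p. poly p 1) (mat_mul n (mat_mul n M X) M') =
        mat_mul n (mat_mul n ?D (map_mat (\<lambda>p. poly p 1) X)) ?D'"
      by (simp only: map_mat_poly_mat_mul M1 M'1 mat_mul_uminus_left mat_mul_uminus_right minus_minus)
    moreover have "mat_eq n (map_mat (\<lambda>p. poly p 1) (mat_mul n (mat_mul n M X) M')) (\<lambda>_ _. 0)"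
      unfolding mat_eq_def map_mat_def
      by (simp flip: factorisation[folded M_def M'_def])
    ultimately have "mat_eq n (mat_mul n (mat_mul n ?D (map_mat (\<lambda>p. poly p 1) X)) ?D') (\<lambda>_ _. 0)"
      by simp
    then have "mat_eq n (mat_mul n ?D (map_mat (\<lambda>p. poly p 1) X)) (\<lambda>_ _. 0)"
      using D' unfolding inverse_mats_def by (blast intro: mat_eq_zero_of_right_inverse)
    then show ?thesis
      using D unfolding inverse_mats_def by (blast intro: mat_eq_zero_of_left_inverse)
  qed
  then have "mat_eq n X (\<lambda>_ _. 0)"
    using X_monom by (auto simp: mat_eq_def map_mat_def)
  then have "mat_eq n (mat_mul n (mat_mul n M X) M') (\<lambda>_ _. 0)"
    by (intro mat_eq_mat_mul_zero_left mat_eq_mat_mul_zero_right)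
  then have "monom 1 K * ([:1, -1:] * r i j) = 0"
    using factorisation[OF ij, folded M_def M'_def] ij by (simp add: mat_eq_def)
  moreover have "[:1, -1:] \<noteq> (0 :: 'r poly)" by simp
  ultimately show ?thesis by (simp del: mult_pCons_left)
qed

section \<open>From the congruence of Blanchfield matrices to \<open>V' = P V P\<^sup>T\<close>\<close>

lemma Jmat_mul_Jmat:
  assumes "i < 2 * g" "j < 2 * g"
  shows "mat_mul (2 * g) Jmat Jmat i j = - mat_one i j"
proof (cases "even i")
  case True
  then have i1: "i + 1 < 2 * g" using assms(1) by presburger
  have "mat_mul (2 * g) Jmat Jmat i j = (\<Sum>k<2 * g. if k = i + 1 then - Jmat k j else 0)"
    unfolding mat_mul_def by (intro sum.cong) (auto simp: Jmat_def True)
  also have "\<dots> = - Jmat (i + 1) j" using i1 by simp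
  finally show ?thesis using True by (auto simp: Jmat_def mat_one_def)
next
  case False
  then have i1: "i - 1 < 2 * g" "1 \<le> i" using assms(1) by presburger+
  have "mat_mul (2 * g) Jmat Jmat i j = (\<Sum>k<2 * g. if k = i - 1 then Jmat k j else 0)"
    unfolding mat_mul_def by (intro sum.cong) (auto simp: Jmat_def False)
  also have "\<dots> = Jmat (i - 1) j" using i1 by simp
  finally show ?thesis using False i1 by (auto simp: Jmat_def mat_one_def)
qed

lemma seifert_matrix_skew_inverse:
  assumes "seifert_matrix g V"
  shows "inverse_mats (2 * g) (\<lambda>i j. V i j - V j i) (\<lambda>i j. - Jmat i j)"
proof -
  have D: "mat_eq (2 * g) (\<lambda>i j. V i j - V j i) Jmat"
    using assms unfolding seifert_matrix_def mat_eq_def by blast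
  have "mat_eq (2 * g) (mat_mul (2 * g) Jmat (\<lambda>i j. - Jmat i j)) mat_one"
    "mat_eq (2 * g) (mat_mul (2 * g) (\<lambda>i j. - Jmat i j) Jmat) mat_one"
    using Jmat_mul_Jmat by (simp_all add: mat_eq_def mat_mul_uminus_left mat_mul_uminus_right)
  then show ?thesis
    unfolding inverse_mats_def using mat_eq_mat_mul[OF D mat_eq_refl] mat_eq_mat_mul[OF mat_eq_refl D]
    by (blast intro: mat_eq_trans)
qed

lemma cleared_gram_difference:
  fixes W M W' M' P Q :: "nat \<Rightarrow> nat \<Rightarrow> 'r::comm_ring_1"
  assumes WM: "mat_eq n (mat_mul n W M) mat_one" and MW': "mat_eq n (mat_mul n M' W') mat_one"
    and PQ: "mat_eq n (mat_mul n P Q) mat_one"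
    and G: "G = (\<lambda>i k. c * mat_transpose W i k
                 - c * mat_mul n (mat_mul n (mat_transpose P) (mat_transpose W')) P i k)"
  shows "mat_eq n (mat_mul n (mat_mul n (mat_transpose M) (mat_mul n G Q)) (mat_transpose M'))
           (\<lambda>i j. c * (mat_mul n Q (mat_transpose M') i j - mat_mul n (mat_transpose M) (mat_transpose P) i j))"
proof -
  define T1 where "T1 = mat_mul n (mat_transpose M) (mat_transpose W)"
  define T2 where "T2 = mat_mul n (mat_transpose M) (mat_mul n (mat_mul n (mat_transpose P) (mat_transpose W')) P)"
  have "mat_mul n (mat_mul n (mat_transpose M) (mat_mul n G Q)) (mat_transpose M') =
      mat_mul n (mat_mul n (mat_mul n (mat_transpose M) G) Q) (mat_transpose M')"
    by (simp add: mat_mul_assoc)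
  also have "mat_mul n (mat_transpose M) G = (\<lambda>i j. c * T1 i j - c * T2 i j)"
    unfolding G T1_def T2_def by (simp add: mat_mul_diff_right mat_mul_scale_right)
  finally have split: "mat_mul n (mat_mul n (mat_transpose M) (mat_mul n G Q)) (mat_transpose M') =
      (\<lambda>i j. c * mat_mul n (mat_mul n T1 Q) (mat_transpose M') i j
             - c * mat_mul n (mat_mul n T2 Q) (mat_transpose M') i j)"
    by (simp add: mat_mul_diff_left mat_mul_scale_left)
  have T1: "mat_eq n (mat_mul n (mat_mul n T1 Q) (mat_transpose M')) (mat_mul n Q (mat_transpose M'))"
  proof -
    have "mat_eq n T1 mat_one"
      unfolding T1_def using mat_eq_transpose[OF WM] by (simp add: mat_transpose_mat_mul)
    then have "mat_eq n (mat_mul n T1 Q) Q"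
      using mat_eq_mat_mul[OF _ mat_eq_refl, of n T1 mat_one Q] mat_mul_one_left by (blast intro: mat_eq_trans)
    then show ?thesis by (rule mat_eq_mat_mul[OF _ mat_eq_refl])
  qed
  have T2: "mat_eq n (mat_mul n (mat_mul n T2 Q) (mat_transpose M')) (mat_mul n (mat_transpose M) (mat_transpose P))"
  proof -
    have "mat_mul n (mat_mul n T2 Q) (mat_transpose M') = mat_mul n (mat_transpose M)
        (mat_mul n (mat_transpose P) (mat_mul n (mat_transpose W') (mat_mul n (mat_mul n P Q) (mat_transpose M'))))"
      unfolding T2_def by (simp add: mat_mul_assoc)
    also have "mat_eq n \<dots> (mat_mul n (mat_transpose M)
        (mat_mul n (mat_transpose P) (mat_mul n (mat_transpose W') (mat_mul n mat_one (mat_transpose M')))))"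
      by (intro mat_eq_mat_mul mat_eq_refl PQ)
    also have "mat_eq n \<dots> (mat_mul n (mat_transpose M) (mat_mul n (mat_transpose P) (mat_transpose (mat_mul n M' W'))))"
      by (simp add: mat_transpose_mat_mul) (intro mat_eq_mat_mul mat_eq_refl mat_mul_one_left)
    also have "mat_eq n \<dots> (mat_mul n (mat_transpose M) (mat_mul n (mat_transpose P) mat_one))"
      using mat_eq_transpose[OF MW'] by (intro mat_eq_mat_mul mat_eq_refl) simp
    also have "mat_eq n \<dots> (mat_mul n (mat_transpose M) (mat_transpose P))"
      by (intro mat_eq_mat_mul mat_eq_refl mat_mul_one_right)
    finally show ?thesis .
  qed
  show ?thesis unfolding split using T1 T2 by (auto simp: mat_eq_def algebra_simps)
qed

lemma conjugate_seifert_matrix: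
  fixes V V' P Q :: "nat \<Rightarrow> nat \<Rightarrow> rat"
  assumes PQ: "mat_eq n (mat_mul n P Q) mat_one" and QV': "mat_eq n (mat_mul n Q V') (mat_mul n V (mat_transpose P))"
    and D: "mat_eq n (\<lambda>i j. V i j - V j i) Jmat" and D': "mat_eq n (\<lambda>i j. V' i j - V' j i) Jmat"
  shows "mat_eq n V' (mat_mul n (mat_mul n P V) (mat_transpose P))"
    and "mat_eq n (mat_mul n (mat_mul n P Jmat) (mat_transpose P)) Jmat"
proof -
  have "mat_eq n V' (mat_mul n mat_one V')" by (rule mat_eq_sym[OF mat_mul_one_left])
  also have "mat_eq n \<dots> (mat_mul n (mat_mul n P Q) V')"
    by (intro mat_eq_mat_mul mat_eq_refl mat_eq_sym[OF PQ])
  also have "\<dots> = mat_mul n P (mat_mul n Q V')" by (rule mat_mul_assoc)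
  also have "mat_eq n \<dots> (mat_mul n P (mat_mul n V (mat_transpose P)))"
    by (intro mat_eq_mat_mul mat_eq_refl QV')
  also have "\<dots> = mat_mul n (mat_mul n P V) (mat_transpose P)" by (rule mat_mul_assoc[symmetric])
  finally show V': "mat_eq n V' (mat_mul n (mat_mul n P V) (mat_transpose P))" .
  let ?PVP = "mat_mul n (mat_mul n P V) (mat_transpose P)"
  have "mat_eq n (mat_mul n (mat_mul n P Jmat) (mat_transpose P))
      (mat_mul n (mat_mul n P (\<lambda>i j. V i j - mat_transpose V i j)) (mat_transpose P))"
    using D by (intro mat_eq_mat_mul mat_eq_refl) (simp add: mat_eq_def mat_transpose_def)
  also have "\<dots> = (\<lambda>i j. ?PVP i j - mat_transpose ?PVP i j)"
    by (simp add: mat_mul_diff_left mat_mul_diff_right mat_transpose_mat_mul mat_mul_assoc)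
  also have "mat_eq n \<dots> (\<lambda>i j. V' i j - V' j i)"
    using V' by (auto simp: mat_eq_def mat_transpose_def)
  also have "mat_eq n \<dots> Jmat" by (rule D')
  finally show "mat_eq n (mat_mul n (mat_mul n P Jmat) (mat_transpose P)) Jmat" .
qed

lemma pres_mat_transpose: "mat_transpose (pres_mat V) = lin_mat (\<lambda>i j. - V i j) (mat_transpose V)"
  by (intro ext) (simp add: pres_mat_def lin_mat_def mat_transpose_def)

lemma map_mat_transpose: "map_mat f (mat_transpose A) = mat_transpose (map_mat f A)"
  by (simp add: map_mat_def mat_transpose_def)

lemma map_mat_pf_mat_mul: "map_mat pf (mat_mul n A B) = mat_mul n (map_mat pf A) (map_mat pf B)"
  by (rule map_mat_mat_mul) (simp_all add: pf_add pf_mult pf_0)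

lemma pf_mat_mul: "pf (mat_mul n A B i j) = mat_mul n (map_mat pf A) (map_mat pf B) i j"
  using map_mat_pf_mat_mul[of n A B] by (simp add: map_mat_def fun_eq_iff)

lemma map_mat_const_mat_mul:
  "map_mat (\<lambda>x. [:x:]) (mat_mul n A B) = mat_mul n (map_mat (\<lambda>x. [:x:]) A) (map_mat (\<lambda>x. [:x:]) B)"
  by (rule map_mat_mat_mul) simp_all

lemma cleared_polynomial_identity:
  fixes V V' P Q :: "nat \<Rightarrow> nat \<Rightarrow> rat" and W W' :: "nat \<Rightarrow> nat \<Rightarrow> rat poly fract"
    and L :: "nat \<Rightarrow> nat \<Rightarrow> rat poly"
  defines "Pc \<equiv> map_mat (\<lambda>x. [:x:]) P" and "Qc \<equiv> map_mat (\<lambda>x. [:x:]) Q"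
  assumes W: "mat_eq n (mat_mul n W (map_mat pf (pres_mat V))) mat_one"
    and W': "mat_eq n (mat_mul n (map_mat pf (pres_mat V')) W') mat_one"
    and PQ: "mat_eq n (mat_mul n P Q) mat_one"
    and L: "\<And>i k. i < n \<Longrightarrow> k < n \<Longrightarrow> pf (monom 1 K) * (pf [:1, -1:] * mat_transpose W i k
        - pf [:1, -1:] * mat_mul n (mat_mul n (mat_transpose (map_mat pf Pc)) (mat_transpose W')) (map_mat pf Pc) i k)
        = pf (L i k)"
    and ij: "i < n" "j < n"
  shows "monom 1 K * ([:1, -1:] * (mat_mul n Qc (mat_transpose (pres_mat V')) i j
           - mat_mul n (mat_transpose (pres_mat V)) (mat_transpose Pc) i j))
         = mat_mul n (mat_mul n (mat_transpose (pres_mat V)) (mat_mul n L Qc)) (mat_transpose (pres_mat V')) i j"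
proof -
  define c where "c = pf [:1, -1:]"
  define pK where "pK = pf (monom 1 K)"
  define M where "M = map_mat pf (pres_mat V)"
  define M' where "M' = map_mat pf (pres_mat V')"
  define Pf where "Pf = map_mat pf Pc"
  define Qf where "Qf = map_mat pf Qc"
  define G where "G = (\<lambda>i k. c * mat_transpose W i k
      - c * mat_mul n (mat_mul n (mat_transpose Pf) (mat_transpose W')) Pf i k)"
  have PQf: "mat_eq n (mat_mul n Pf Qf) mat_one"
  proof -
    have "mat_mul n Pf Qf = map_mat pf (map_mat (\<lambda>x. [:x:]) (mat_mul n P Q))"
      unfolding Pf_def Qf_def Pc_def Qc_def by (simp add: map_mat_pf_mat_mul map_mat_const_mat_mul)
    with PQ show ?thesis
      by (auto simp: mat_eq_def map_mat_def mat_one_def pf_1 pf_0 one_pCons[symmetric])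
  qed
  have "pf (monom 1 K * ([:1, -1:] * (mat_mul n Qc (mat_transpose (pres_mat V')) i j
        - mat_mul n (mat_transpose (pres_mat V)) (mat_transpose Pc) i j)))
      = pK * (c * (mat_mul n Qf (mat_transpose M') i j - mat_mul n (mat_transpose M) (mat_transpose Pf) i j))"
    unfolding pK_def c_def M_def M'_def Pf_def Qf_def
    by (simp only: pf_mult pf_diff pf_mat_mul map_mat_transpose)
  also have "\<dots> = pK * mat_mul n (mat_mul n (mat_transpose M) (mat_mul n G Qf)) (mat_transpose M') i j"
    using cleared_gram_difference[OF W[folded M_def] W'[folded M'_def] PQf G_def] ij
    by (simp add: mat_eq_def)
  also have "\<dots> = mat_mul n (mat_mul n (mat_transpose M) (mat_mul n (\<lambda>i k. pK * G i k) Qf)) (mat_transpose M') i j"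
    by (simp add: mat_mul_scale_left mat_mul_scale_right)
  also have "\<dots> = mat_mul n (mat_mul n (mat_transpose M) (mat_mul n (map_mat pf L) Qf)) (mat_transpose M') i j"
  proof -
    have "mat_eq n (\<lambda>i k. pK * G i k) (map_mat pf L)"
      using L unfolding mat_eq_def map_mat_def pK_def G_def c_def Pf_def by simp
    then have "mat_eq n (mat_mul n (mat_mul n (mat_transpose M) (mat_mul n (\<lambda>i k. pK * G i k) Qf)) (mat_transpose M'))
        (mat_mul n (mat_mul n (mat_transpose M) (mat_mul n (map_mat pf L) Qf)) (mat_transpose M'))"
      by (intro mat_eq_mat_mul mat_eq_refl)
    then show ?thesis using ij by (simp add: mat_eq_def)
  qed
  also have "\<dots> = pf (mat_mul n (mat_mul n (mat_transpose (pres_mat V)) (mat_mul n L Qc)) (mat_transpose (pres_mat V')) i j)"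
    unfolding M_def M'_def Qf_def by (simp only: pf_mat_mul map_mat_pf_mat_mul map_mat_transpose)
  finally show ?thesis by (simp only: pf_inject)
qed

text \<open>Preservation of the Blanchfield form in the bases \<open>b\<close>, \<open>b'\<close> says that
  \<open>(1 - t)(W\<^sup>T - P\<^sup>T W'\<^sup>T P)\<close> has Laurent polynomial entries, where \<open>W\<close>, \<open>W'\<close> invert the
  presentation matrices \<open>tV - V\<^sup>T\<close>, \<open>tV' - V'\<^sup>T\<close>.\<close>

lemma seifert_relation_of_gram_congruence:
  fixes V V' P Q :: "nat \<Rightarrow> nat \<Rightarrow> rat" and W W' :: "nat \<Rightarrow> nat \<Rightarrow> rat poly fract"
  defines "Pf \<equiv> map_mat (\<lambda>x. pf [:x:]) P"
  assumes seif: "seifert_matrix g V" and seif': "seifert_matrix g V'"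
    and inv: "mat_invertible (2 * g) V" and inv': "mat_invertible (2 * g) V'"
    and W: "inverse_mats (2 * g) W (map_mat pf (pres_mat V))"
    and W': "inverse_mats (2 * g) W' (map_mat pf (pres_mat V'))"
    and PQ: "mat_eq (2 * g) (mat_mul (2 * g) P Q) mat_one"
    and gram: "\<And>i k. i < 2 * g \<Longrightarrow> k < 2 * g \<Longrightarrow> laurent (pf [:1, -1:] * mat_transpose W i k
        - pf [:1, -1:] * mat_mul (2 * g) (mat_mul (2 * g) (mat_transpose Pf) (mat_transpose W')) Pf i k)"
  shows "mat_eq (2 * g) (mat_mul (2 * g) Q V') (mat_mul (2 * g) V (mat_transpose P))"
proof -
  define n where "n = 2 * g"
  obtain B B' where V: "inverse_mats n V B" and V': "inverse_mats n V' B'"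
    using inv inv' unfolding mat_invertible_iff_inverse_mats n_def by blast
  have WM: "mat_eq n (mat_mul n W (map_mat pf (pres_mat V))) mat_one"
    and MW': "mat_eq n (mat_mul n (map_mat pf (pres_mat V')) W') mat_one"
    using W W' unfolding inverse_mats_def n_def by blast+
  define Pc where "Pc = map_mat (\<lambda>x. [:x:]) P"
  define Qc where "Qc = map_mat (\<lambda>x. [:x:]) Q"
  define r where "r i j = mat_mul n Qc (mat_transpose (pres_mat V')) i j
      - mat_mul n (mat_transpose (pres_mat V)) (mat_transpose Pc) i j" for i j
  have Pf: "Pf = map_mat pf Pc" by (simp add: Pf_def Pc_def map_mat_def)
  define G where "G i k = pf [:1, -1:] * mat_transpose W i k
      - pf [:1, -1:] * mat_mul n (mat_mul n (mat_transpose Pf) (mat_transpose W')) Pf i k" for i k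
  obtain K L where L: "\<And>i k. i < n \<Longrightarrow> k < n \<Longrightarrow> pf (monom 1 K) * G i k = pf (L i k)"
    using laurent_common_denominator[of n G] gram unfolding G_def n_def by blast
  have "r i j = 0" if ij: "i < n" "j < n" for i j
  proof (rule poly_mat_zero_of_factorisation[OF V V'
        seifert_matrix_skew_inverse[OF seif, folded n_def] seifert_matrix_skew_inverse[OF seif', folded n_def] _ _ ij])
    fix i j
    have "degree (mat_mul n Qc (mat_transpose (pres_mat V')) i j) \<le> 0 + 1"
      "degree (mat_mul n (mat_transpose (pres_mat V)) (mat_transpose Pc) i j) \<le> 1 + 0"
      by (intro degree_mat_mul_le; simp add: Pc_def Qc_def map_mat_def pres_mat_def mat_transpose_def)+
    then show "degree (r i j) \<le> 1" unfolding r_def by (intro degree_diff_le) simp_all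
    assume ij': "i < n" "j < n"
    show "monom 1 K * ([:1, -1:] * r i j) = mat_mul n (mat_mul n (lin_mat (\<lambda>i j. - V i j) (mat_transpose V))
        (mat_mul n L Qc)) (lin_mat (\<lambda>i j. - V' i j) (mat_transpose V')) i j"
      unfolding r_def pres_mat_transpose[symmetric] Qc_def Pc_def
      by (rule cleared_polynomial_identity[OF WM MW' PQ[folded n_def] _ ij'])
        (use L in \<open>simp_all add: G_def Pf Pc_def\<close>)
  qed
  moreover have "poly (r i j) 0 = mat_mul n V (mat_transpose P) i j - mat_mul n Q V' i j" for i j
  proof -
    have "map_mat (\<lambda>p. poly p 0) Qc = Q" "map_mat (\<lambda>p. poly p 0) (mat_transpose Pc) = mat_transpose P"
      "map_mat (\<lambda>p. poly p 0) (mat_transpose (pres_mat V)) = (\<lambda>i j. - V i j)"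
      "map_mat (\<lambda>p. poly p 0) (mat_transpose (pres_mat V')) = (\<lambda>i j. - V' i j)"
      by (auto simp: map_mat_def Qc_def Pc_def mat_transpose_def pres_mat_def)
    then show ?thesis
      using fun_cong[OF fun_cong[OF map_mat_poly_mat_mul[of 0 n Qc "mat_transpose (pres_mat V')"]], of i j]
        fun_cong[OF fun_cong[OF map_mat_poly_mat_mul[of 0 n "mat_transpose (pres_mat V)" "mat_transpose Pc"]], of i j]
      by (simp add: r_def map_mat_def mat_mul_uminus_left mat_mul_uminus_right)
  qed
  ultimately show ?thesis unfolding n_def[symmetric] mat_eq_def by (metis poly_0 eq_iff_diff_eq_0)
qed

section \<open>Generating families associated with an invertible Seifert matrix are bases\<close>

lemma poly_act_const: "poly_act sc tau [:c:] x = sc c x"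
  by (simp add: poly_act_def)

lemma poly_act_linear:
  assumes "vector_space sc"
  shows "poly_act sc tau [:a, b:] x = sc a x + sc b (tau x)"
proof -
  interpret vector_space sc by fact
  show ?thesis by (cases "b = 0") (simp_all add: poly_act_def)
qed

lemma pres_mat_eq_lin_mat: "pres_mat V = lin_mat (\<lambda>i j. - mat_transpose V i j) V"
  by (intro ext) (simp add: pres_mat_def lin_mat_def mat_transpose_def)

context module
begin

lemma sum_scale_transform_inverse:
  assumes VB: "mat_eq n (mat_mul n V B) mat_one"
    and y: "\<And>j. j < n \<Longrightarrow> y j = (\<Sum>i<n. V i j *s x i)" and m: "m < n"
  shows "x m = (\<Sum>j<n. B j m *s y j)"
proof -
  have "(\<Sum>j<n. B j m *s y j) = (\<Sum>j<n. \<Sum>i<n. (V i j * B j m) *s x i)"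
    using y by (simp add: scale_sum_right mult.commute)
  also have "\<dots> = (\<Sum>i<n. \<Sum>j<n. (V i j * B j m) *s x i)" by (rule sum.swap)
  also have "\<dots> = (\<Sum>i<n. mat_mul n V B i m *s x i)"
    by (simp add: mat_mul_def scale_sum_left)
  also have "\<dots> = (\<Sum>i<n. (if i = m then 1 else 0) *s x i)"
    using VB m by (intro sum.cong) (auto simp: mat_eq_def mat_one_def)
  also have "\<dots> = x m" using m by (simp add: if_distrib[of "\<lambda>c. c *s _"] cong: if_cong)
  finally show ?thesis by simp
qed

lemma sum_scale_transform_compose:
  assumes x: "\<And>k. k < n \<Longrightarrow> x k = (\<Sum>j<n. Q j k *s y j)"
    and y: "\<And>j. j < n \<Longrightarrow> y j = (\<Sum>l<n. P l j *s x l)" and k: "k < n"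
  shows "x k = (\<Sum>l<n. mat_mul n P Q l k *s x l)"
proof -
  have "x k = (\<Sum>j<n. Q j k *s (\<Sum>l<n. P l j *s x l))" using x[OF k] y by simp
  also have "\<dots> = (\<Sum>j<n. \<Sum>l<n. (P l j * Q j k) *s x l)"
    by (simp add: scale_sum_right mult.commute)
  also have "\<dots> = (\<Sum>l<n. \<Sum>j<n. (P l j * Q j k) *s x l)" by (rule sum.swap)
  also have "\<dots> = (\<Sum>l<n. mat_mul n P Q l k *s x l)" by (simp add: mat_mul_def scale_sum_left)
  finally show ?thesis .
qed

lemma mat_eq_one_of_independent:
  assumes indep: "\<And>c l. (\<Sum>i<n. c i *s x i) = 0 \<Longrightarrow> l < n \<Longrightarrow> c l = 0"
    and R: "\<And>k. k < n \<Longrightarrow> x k = (\<Sum>l<n. R l k *s x l)"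
  shows "mat_eq n R mat_one"
  unfolding mat_eq_def
proof (intro allI impI)
  fix l k assume l: "l < n" and k: "k < n"
  have "(\<Sum>i<n. (R i k - mat_one i k) *s x i) = (\<Sum>i<n. R i k *s x i) - (\<Sum>i<n. mat_one i k *s x i)"
    by (simp add: scale_left_diff_distrib sum_subtractf)
  also have "(\<Sum>i<n. mat_one i k *s x i) = x k"
    using k by (simp add: mat_one_def if_distrib[of "\<lambda>c. c *s _"] cong: if_cong)
  finally have "(\<Sum>i<n. (R i k - mat_one i k) *s x i) = 0" using R[OF k] by simp
  from indep[OF this l] show "R l k = mat_one l k" by simp
qed

end

lemma family_basis_repr:
  assumes "vector_space sc" and b: "is_family_basis n sc b"
  shows "\<exists>c. x = (\<Sum>i<n. sc (c i) (b i))"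
proof -
  interpret vector_space sc by fact
  have inj: "inj_on b {..<n}" using b unfolding is_family_basis_def by blast
  have "x \<in> span (b ` {..<n})" using b unfolding is_family_basis_def by blast
  then obtain u where "x = (\<Sum>v\<in>b ` {..<n}. sc (u v) v)"
    using span_finite[of "b ` {..<n}"] by auto
  also have "\<dots> = (\<Sum>i<n. sc (u (b i)) (b i))"
    by (rule sum.reindex[OF inj, unfolded comp_def])
  finally show ?thesis by (intro exI[of _ "\<lambda>i. u (b i)"])
qed

lemma family_basis_independent:
  assumes "vector_space sc" and b: "is_family_basis n sc b"
    and sum0: "(\<Sum>i<n. sc (c i) (b i)) = 0" and l: "l < n"
  shows "c l = 0"
proof -
  interpret vector_space sc by fact
  have inj: "inj_on b {..<n}" and indep: "\<not> dependent (b ` {..<n})"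
    using b unfolding is_family_basis_def by blast+
  define u where "u v = c (the_inv_into {..<n} b v)" for v
  have "(\<Sum>v\<in>b ` {..<n}. sc (u v) v) = 0"
    using sum0 by (simp add: sum.reindex[OF inj] u_def the_inv_into_f_f[OF inj])
  then have "u (b l) = 0" using indep dependent_finite[of "b ` {..<n}"] l by auto
  then show ?thesis using l by (simp add: u_def the_inv_into_f_f[OF inj])
qed

lemma assoc_generators_independent:
  assumes gen: "assoc_generators g V sc tau phi b" and V: "inverse_mats (2 * g) V B"
    and sum0: "(\<Sum>i<2 * g. sc (c i) (b i)) = 0" and l: "l < 2 * g"
  shows "c l = 0"
proof -
  define n where "n = 2 * g"
  have relations: "\<And>p. (\<Sum>i<n. poly_act sc tau (p i) (b i)) = 0 \<Longrightarrow>
      \<exists>(q :: nat \<Rightarrow> rat poly) k. \<forall>i<n. monom 1 k * p i = (\<Sum>j<n. q j * pres_mat V i j)"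
    using gen unfolding assoc_generators_def n_def by blast
  have "(\<Sum>i<n. poly_act sc tau [:c i:] (b i)) = 0"
    using sum0 by (simp add: poly_act_const n_def)
  from relations[OF this] obtain q k
    where qk: "\<And>i. i < n \<Longrightarrow> monom 1 k * [:c i:] = (\<Sum>j<n. q j * pres_mat V i j)"
    by blast
  txt \<open>As a column \<open>X\<close>, \<open>q\<close> satisfies \<open>(tV - V\<^sup>T) X = t\<^sup>k c\<close>, whose coefficients vanish
    outside degree \<open>k\<close>; this leaves no room for a nonzero \<open>X\<close>.\<close>
  define X where "X = (\<lambda>j (_::nat). q j)"
  have X_zero: "mat_eq n (coeff_mat X m) (\<lambda>_ _. 0)" for m
  proof (rule coeff_mat_support_left[where lo = k and hi = k])
    show "mat_eq n (mat_mul n (\<lambda>i j. - mat_transpose B i j) (\<lambda>i j. - mat_transpose V i j)) mat_one"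
      using inverse_mats_uminus[OF inverse_mats_transpose[OF V]] unfolding inverse_mats_def n_def by blast
    show "mat_eq n (mat_mul n B V) mat_one" using V unfolding inverse_mats_def n_def by blast
    fix m' assume "m' < k \<or> k < m'"
    then show "mat_eq n (coeff_mat (mat_mul n (lin_mat (\<lambda>i j. - mat_transpose V i j) V) X) m') (\<lambda>_ _. 0)"
      unfolding pres_mat_eq_lin_mat[symmetric] mat_eq_def coeff_mat_def
      by (auto simp: mat_mul_def X_def mult.commute qk[symmetric] coeff_monom_mult)
  qed linarith
  have "q j = 0" if "j < n" for j
    using X_zero that by (intro poly_eqI) (auto simp: mat_eq_def coeff_mat_def X_def)
  then have "monom 1 k * [:c l:] = 0" using qk[of l] l unfolding n_def by simp
  then show ?thesis by simp
qed

lemma assoc_generators_shift_in_span: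
  assumes lm: "laurent_module sc tau" and gen: "assoc_generators g V sc tau phi b"
    and V: "inverse_mats (2 * g) V B" and m: "m < 2 * g"
  shows "tau (b m) \<in> module.span sc (b ` {..<2 * g})"
    and "inv tau (b m) \<in> module.span sc (b ` {..<2 * g})"
proof -
  interpret vector_space sc using lm unfolding laurent_module_def by blast
  have hom: "module_hom sc sc tau" and "bij tau"
    using lm unfolding laurent_module_def linear_iff_module_hom by blast+
  then have hom_inv: "module_hom sc sc (inv tau)"
    by (rule module_pair.bij_module_hom_imp_inv_module_hom[OF module_pair.intro, OF module_axioms module_axioms])
  have "\<forall>j<2 * g. (\<Sum>i<2 * g. poly_act sc tau (pres_mat V i j) (b i)) = 0"
    using gen unfolding assoc_generators_def by blast
  then have rel: "(\<Sum>i<2 * g. sc (V i j) (tau (b i))) = (\<Sum>i<2 * g. sc (V j i) (b i))" if "j < 2 * g" for j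
    using that
    by (simp add: pres_mat_def poly_act_linear[OF vector_space_axioms] sum_subtractf)
  have rel_inv: "(\<Sum>i<2 * g. sc (V i j) (b i)) = (\<Sum>i<2 * g. sc (mat_transpose V i j) (inv tau (b i)))"
    if "j < 2 * g" for j
  proof -
    have "(\<Sum>i<2 * g. sc (V i j) (b i)) = inv tau (\<Sum>i<2 * g. sc (V i j) (tau (b i)))"
      using \<open>bij tau\<close> by (simp add: module_hom.sum[OF hom_inv] module_hom.scale[OF hom_inv] bij_is_inj)
    also have "\<dots> = (\<Sum>i<2 * g. sc (mat_transpose V i j) (inv tau (b i)))"
      by (simp add: rel[OF that] module_hom.sum[OF hom_inv] module_hom.scale[OF hom_inv] mat_transpose_def)
    finally show ?thesis .
  qed
  have VB: "mat_eq (2 * g) (mat_mul (2 * g) V B) mat_one" and VB': "mat_eq (2 * g) (mat_mul (2 * g) (mat_transpose V) (mat_transpose B)) mat_one"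
    using V inverse_mats_transpose[OF V] unfolding inverse_mats_def by blast+
  have "tau (b m) = (\<Sum>j<2 * g. sc (B j m) (\<Sum>i<2 * g. sc (V j i) (b i)))"
    using m by (intro sum_scale_transform_inverse[OF VB]) (simp_all add: rel[symmetric])
  also have "\<dots> \<in> span (b ` {..<2 * g})" by (intro span_sum span_scale) (auto intro: span_base)
  finally show "tau (b m) \<in> span (b ` {..<2 * g})" .
  have "inv tau (b m) = (\<Sum>j<2 * g. sc (mat_transpose B j m) (\<Sum>i<2 * g. sc (V i j) (b i)))"
    using m by (intro sum_scale_transform_inverse[OF VB']) (simp_all add: rel_inv)
  also have "\<dots> \<in> span (b ` {..<2 * g})" by (intro span_sum span_scale) (auto intro: span_base)
  finally show "inv tau (b m) \<in> span (b ` {..<2 * g})" .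
qed

lemma assoc_generators_span:
  assumes lm: "laurent_module sc tau" and gen: "assoc_generators g V sc tau phi b"
    and V: "inverse_mats (2 * g) V B"
  shows "module.span sc (b ` {..<2 * g}) = UNIV"
proof -
  interpret vector_space sc using lm unfolding laurent_module_def by blast
  have hom: "module_hom sc sc tau" and "bij tau"
    using lm unfolding laurent_module_def linear_iff_module_hom by blast+
  then have hom_inv: "module_hom sc sc (inv tau)"
    by (rule module_pair.bij_module_hom_imp_inv_module_hom[OF module_pair.intro, OF module_axioms module_axioms])
  define S where "S = span (b ` {..<2 * g})"
  have "f ` S \<subseteq> S" if "module_hom sc sc f" "\<And>m. m < 2 * g \<Longrightarrow> f (b m) \<in> S" for f
    unfolding S_def module_hom.span_image[OF that(1), symmetric]
    by (rule span_minimal) (use that(2) in \<open>auto simp: S_def\<close>)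
  then have "tau ` S \<subseteq> S" "inv tau ` S \<subseteq> S"
    using assoc_generators_shift_in_span[OF lm gen V] hom hom_inv unfolding S_def by blast+
  then have "(tau ^^ k) x \<in> S" "(inv tau ^^ k) x \<in> S" if "x \<in> S" for x k
    using that by (induction k) auto
  moreover have "b i \<in> S" if "i < 2 * g" for i
    unfolding S_def using that by (intro span_base) auto
  ultimately have "span ({(tau ^^ k) (b i) | k i. i < 2 * g} \<union> {(inv tau ^^ k) (b i) | k i. i < 2 * g}) \<subseteq> S"
    unfolding S_def by (intro span_minimal) (auto simp: S_def)
  moreover have "span ({(tau ^^ k) (b i) | k i. i < 2 * g} \<union> {(inv tau ^^ k) (b i) | k i. i < 2 * g}) = UNIV"
    using gen unfolding assoc_generators_def by blast
  ultimately show ?thesis unfolding S_def by blast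
qed

lemma assoc_generators_basis:
  assumes lm: "laurent_module sc tau" and gen: "assoc_generators g V sc tau phi b"
    and V: "mat_invertible (2 * g) V"
  shows "is_family_basis (2 * g) sc b"
proof -
  interpret vector_space sc using lm unfolding laurent_module_def by blast
  obtain B where B: "inverse_mats (2 * g) V B" using V mat_invertible_iff_inverse_mats by blast
  have indep: "c l = 0" if "(\<Sum>i<2 * g. sc (c i) (b i)) = 0" "l < 2 * g" for c l
    by (rule assoc_generators_independent[OF gen B that])
  have inj: "inj_on b {..<2 * g}"
  proof (rule inj_onI, rule ccontr)
    fix i j assume i: "i \<in> {..<2 * g}" and j: "j \<in> {..<2 * g}" and "b i = b j" "i \<noteq> j"
    then have "(\<Sum>l<2 * g. sc (if l = i then 1 else if l = j then -1 else 0) (b l)) = 0"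
      by (simp add: if_distrib[of "\<lambda>c. sc c _"] sum.If_cases Int_absorb1)
    from indep[OF this, of i] i show False by simp
  qed
  have "\<not> dependent (b ` {..<2 * g})"
  proof
    assume "dependent (b ` {..<2 * g})"
    then obtain u where u: "\<exists>v\<in>b ` {..<2 * g}. u v \<noteq> 0" "(\<Sum>v\<in>b ` {..<2 * g}. sc (u v) v) = 0"
      using dependent_finite[of "b ` {..<2 * g}"] by auto
    have "(\<Sum>i<2 * g. sc (u (b i)) (b i)) = 0"
      using u(2) sum.reindex[OF inj, of "\<lambda>v. sc (u v) v"] by simp
    then show False using u(1) indep[of "\<lambda>i. u (b i)"] by auto
  qed
  then show ?thesis
    unfolding is_family_basis_def using inj assoc_generators_span[OF lm gen B] by blast
qed

lemma basis_change_right_inverse: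
  assumes vs: "vector_space sc" and vs': "vector_space sc'"
    and b: "is_family_basis n sc b" and b': "is_family_basis n sc' b'"
    and xi: "Vector_Spaces.linear sc sc' xi" "surj xi"
    and P: "\<And>i. i < n \<Longrightarrow> xi (b i) = (\<Sum>k<n. sc' (P k i) (b' k))"
  obtains Q where "mat_eq n (mat_mul n P Q) mat_one"
proof -
  interpret vs': vector_space sc' by fact
  have hom: "module_hom sc sc' xi" using xi linear_iff_module_hom by blast
  have "\<forall>k. \<exists>c. b' k = xi (\<Sum>j<n. sc (c j) (b j))"
    using family_basis_repr[OF vs b] \<open>surj xi\<close> by (metis surjD)
  then obtain c where c: "\<And>k. b' k = xi (\<Sum>j<n. sc (c k j) (b j))" by metis
  define Q where "Q j k = c k j" for j k
  have b'Q: "b' k = (\<Sum>j<n. sc' (Q j k) (xi (b j)))" for k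
    using c[of k] by (simp add: module_hom.sum[OF hom] module_hom.scale[OF hom] Q_def)
  have "mat_eq n (mat_mul n P Q) mat_one"
  proof (rule vs'.mat_eq_one_of_independent[where x = b'])
    show "\<And>c l. (\<Sum>i<n. sc' (c i) (b' i)) = 0 \<Longrightarrow> l < n \<Longrightarrow> c l = 0"
      by (rule family_basis_independent[OF vs' b'])
    show "b' k = (\<Sum>l<n. sc' (mat_mul n P Q l k) (b' l))" if "k < n" for k
      by (rule vs'.sum_scale_transform_compose[where y = "\<lambda>j. xi (b j)", OF _ _ that])
        (simp_all add: b'Q P)
  qed
  then show ?thesis by (rule that)
qed

section \<open>The Blanchfield form in the bases\<close>

lemma mod_laurent_linear_sum:
  assumes add: "\<And>x y. mod_laurent (f (x + y)) (f x + f y)"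
    and scale: "\<And>c x. mod_laurent (f (sc c x)) (pf [:c:] * f x)"
  shows "mod_laurent (f (\<Sum>l\<in>A. sc (c l) (x l))) (\<Sum>l\<in>A. pf [:c l:] * f (x l))"
proof -
  have f0: "mod_laurent (f 0) 0"
    using add[of 0 0] unfolding mod_laurent_def using laurent_uminus by fastforce
  show ?thesis
  proof (induction A rule: infinite_finite_induct)
    case (insert a A)
    have "mod_laurent (f (sc (c a) (x a) + (\<Sum>l\<in>A. sc (c l) (x l))))
        (f (sc (c a) (x a)) + f (\<Sum>l\<in>A. sc (c l) (x l)))" by (rule add)
    also have "mod_laurent \<dots> (pf [:c a:] * f (x a) + (\<Sum>l\<in>A. pf [:c l:] * f (x l)))"
      by (rule mod_laurent_add[OF scale insert.IH])
    finally show ?case using insert.hyps by simp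
  qed (use f0 in simp_all)
qed

lemma blanchfield_gram_change_of_basis:
  assumes form: "blanchfield_type_form sc' tau' phi'"
    and pres: "\<forall>x y. mod_laurent (phi' (xi x) (xi y)) (phi x y)"
    and P: "\<And>i. i < n \<Longrightarrow> xi (b i) = (\<Sum>k<n. sc' (P k i) (b' k))"
    and ik: "i < n" "k < n"
  shows "mod_laurent (phi (b i) (b k))
           (\<Sum>l<n. \<Sum>m<n. pf [:P l i:] * phi' (b' l) (b' m) * pf [:P m k:])"
proof -
  have lin_left: "mod_laurent (phi' (\<Sum>l\<in>A. sc' (c l) (x l)) y) (\<Sum>l\<in>A. pf [:c l:] * phi' (x l) y)"
    for A c x y
    by (rule mod_laurent_linear_sum) (use form in \<open>auto simp: blanchfield_type_form_def\<close>)
  have lin_right: "mod_laurent (phi' y (\<Sum>l\<in>A. sc' (c l) (x l))) (\<Sum>l\<in>A. pf [:c l:] * phi' y (x l))"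
    for A c x y
    by (rule mod_laurent_linear_sum) (use form in \<open>auto simp: blanchfield_type_form_def\<close>)
  have "mod_laurent (phi (b i) (b k)) (phi' (xi (b i)) (xi (b k)))"
    using pres by (simp add: mod_laurent_sym)
  also have "phi' (xi (b i)) (xi (b k)) = phi' (\<Sum>l<n. sc' (P l i) (b' l)) (\<Sum>m<n. sc' (P m k) (b' m))"
    using P ik by simp
  also have "mod_laurent \<dots> (\<Sum>l<n. pf [:P l i:] * phi' (b' l) (\<Sum>m<n. sc' (P m k) (b' m)))"
    by (rule lin_left)
  also have "mod_laurent \<dots> (\<Sum>l<n. pf [:P l i:] * (\<Sum>m<n. pf [:P m k:] * phi' (b' l) (b' m)))"
    by (intro mod_laurent_sum mod_laurent_mult_pf lin_right)
  also have "\<dots> = (\<Sum>l<n. \<Sum>m<n. pf [:P l i:] * phi' (b' l) (b' m) * pf [:P m k:])"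
    by (simp add: sum_distrib_left mult_ac)
  finally show ?thesis .
qed

lemma assoc_generators_blanchfield_matrix:
  assumes "assoc_generators g V sc tau phi b"
  obtains W where "inverse_mats (2 * g) W (map_mat pf (pres_mat V))"
    and "\<And>i k. i < 2 * g \<Longrightarrow> k < 2 * g \<Longrightarrow> mod_laurent (phi (b i) (b k)) (pf [:1, -1:] * W k i)"
  using assms unfolding assoc_generators_def inverse_mats_def mat_eq_def mat_mul_def map_mat_def mat_one_def
  by blast

lemma blanchfield_matrix_congruence:
  fixes P :: "nat \<Rightarrow> nat \<Rightarrow> rat"
  defines "Pf \<equiv> map_mat (\<lambda>x. pf [:x:]) P"
  assumes form: "blanchfield_type_form sc' tau' phi'"
    and pres: "\<forall>x y. mod_laurent (phi' (xi x) (xi y)) (phi x y)"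
    and P: "\<And>i. i < n \<Longrightarrow> xi (b i) = (\<Sum>k<n. sc' (P k i) (b' k))"
    and W: "\<And>i k. i < n \<Longrightarrow> k < n \<Longrightarrow> mod_laurent (phi (b i) (b k)) (pf [:1, -1:] * W k i)"
    and W': "\<And>i k. i < n \<Longrightarrow> k < n \<Longrightarrow> mod_laurent (phi' (b' i) (b' k)) (pf [:1, -1:] * W' k i)"
    and ik: "i < n" "k < n"
  shows "laurent (pf [:1, -1:] * mat_transpose W i k
           - pf [:1, -1:] * mat_mul n (mat_mul n (mat_transpose Pf) (mat_transpose W')) Pf i k)"
proof -
  define c where "c = pf [:1, -1:]"
  have "mod_laurent (c * W k i) (phi (b i) (b k))" using W[OF ik] unfolding c_def by (rule mod_laurent_sym)
  also have "mod_laurent \<dots> (\<Sum>l<n. \<Sum>m<n. pf [:P l i:] * phi' (b' l) (b' m) * pf [:P m k:])"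
    by (rule blanchfield_gram_change_of_basis[OF form pres P ik])
  also have "mod_laurent \<dots> (\<Sum>l<n. \<Sum>m<n. pf [:P l i:] * (c * W' m l) * pf [:P m k:])"
  proof (intro mod_laurent_sum)
    fix l m assume "l \<in> {..<n}" "m \<in> {..<n}"
    then have "mod_laurent (pf [:P m k:] * (pf [:P l i:] * phi' (b' l) (b' m)))
        (pf [:P m k:] * (pf [:P l i:] * (c * W' m l)))"
      unfolding c_def by (intro mod_laurent_mult_pf W') auto
    then show "mod_laurent (pf [:P l i:] * phi' (b' l) (b' m) * pf [:P m k:])
        (pf [:P l i:] * (c * W' m l) * pf [:P m k:])"
      by (simp only: mult_ac)
  qed
  also have "\<dots> = (\<Sum>m<n. \<Sum>l<n. c * (pf [:P l i:] * W' m l * pf [:P m k:]))"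
    by (subst sum.swap) (simp add: mult_ac)
  also have "\<dots> = c * mat_mul n (mat_mul n (mat_transpose Pf) (mat_transpose W')) Pf i k"
    unfolding mat_mul_def mat_transpose_def Pf_def map_mat_def
    by (simp add: sum_distrib_left sum_distrib_right mult_ac)
  finally show ?thesis unfolding mod_laurent_def c_def by (simp add: mat_transpose_def)
qed

theorem mainTheorem10:
  fixes g :: nat
    and V V' :: "nat \<Rightarrow> nat \<Rightarrow> rat"
    and sc :: "rat \<Rightarrow> 'a::ab_group_add \<Rightarrow> 'a" and tau :: "'a \<Rightarrow> 'a"
    and phi :: "'a \<Rightarrow> 'a \<Rightarrow> rat poly fract" and b :: "nat \<Rightarrow> 'a"
    and sc' :: "rat \<Rightarrow> 'b::ab_group_add \<Rightarrow> 'b" and tau' :: "'b \<Rightarrow> 'b"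
    and phi' :: "'b \<Rightarrow> 'b \<Rightarrow> rat poly fract" and b' :: "nat \<Rightarrow> 'b"
    and xi :: "'a \<Rightarrow> 'b"
  assumes mod1: "laurent_module sc tau" and mod2: "laurent_module sc' tau'"
    and form1: "blanchfield_type_form sc tau phi" and form2: "blanchfield_type_form sc' tau' phi'"
    and seif1: "seifert_matrix g V" and seif2: "seifert_matrix g V'"
    and gen1: "assoc_generators g V sc tau phi b"
    and gen2: "assoc_generators g V' sc' tau' phi' b'"
    and xi_lin: "Vector_Spaces.linear sc sc' xi" and xi_bij: "bij xi"
    and xi_tau: "\<forall>x. xi (tau x) = tau' (xi x)"
    and xi_pres: "\<forall>x y. mod_laurent (phi' (xi x) (xi y)) (phi x y)"
    and inv1: "mat_invertible (2*g) V" and inv2: "mat_invertible (2*g) V'"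
  shows "is_family_basis (2*g) sc b \<and> is_family_basis (2*g) sc' b' \<and>
         (\<forall>P. (\<forall>i<2*g. xi (b i) = (\<Sum>k<2*g. sc' (P k i) (b' k))) \<longrightarrow>
              symplectic g P \<and>
              mat_eq (2*g) V' (mat_mult (2*g) (mat_mult (2*g) P V) (mat_transp P)))"
  \<comment> \<open>\<open>form1\<close> and \<open>xi_tau\<close> are not needed: only the values of \<open>phi\<close> on the \<open>b\<^sub>i\<close>, which
     \<open>gen1\<close> prescribes, enter, and \<open>P\<close> is merely the matrix of the \<open>\<rat>\<close>-linear map \<open>xi\<close>.\<close>
proof (intro conjI allI impI)
  show basis: "is_family_basis (2*g) sc b" by (rule assoc_generators_basis[OF mod1 gen1 inv1])
  show basis': "is_family_basis (2*g) sc' b'" by (rule assoc_generators_basis[OF mod2 gen2 inv2])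
  fix P assume "\<forall>i<2*g. xi (b i) = (\<Sum>k<2*g. sc' (P k i) (b' k))"
  then have P: "\<And>i. i < 2 * g \<Longrightarrow> xi (b i) = (\<Sum>k<2 * g. sc' (P k i) (b' k))" by simp
  obtain Q where PQ: "mat_eq (2 * g) (mat_mul (2 * g) P Q) mat_one"
    using basis_change_right_inverse[OF _ _ basis basis' xi_lin bij_is_surj[OF xi_bij] P] mod1 mod2
    unfolding laurent_module_def by blast
  obtain W where W: "inverse_mats (2 * g) W (map_mat pf (pres_mat V))"
    and gram: "\<And>i k. i < 2 * g \<Longrightarrow> k < 2 * g \<Longrightarrow> mod_laurent (phi (b i) (b k)) (pf [:1, -1:] * W k i)"
    using assoc_generators_blanchfield_matrix[OF gen1] by blast
  obtain W' where W': "inverse_mats (2 * g) W' (map_mat pf (pres_mat V'))"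
    and gram': "\<And>i k. i < 2 * g \<Longrightarrow> k < 2 * g \<Longrightarrow> mod_laurent (phi' (b' i) (b' k)) (pf [:1, -1:] * W' k i)"
    using assoc_generators_blanchfield_matrix[OF gen2] by blast
  have "mat_eq (2 * g) (mat_mul (2 * g) Q V') (mat_mul (2 * g) V (mat_transpose P))"
    by (rule seifert_relation_of_gram_congruence[OF seif1 seif2 inv1 inv2 W W' PQ
          blanchfield_matrix_congruence[where b = b and b' = b' and P = P, OF form2 xi_pres P gram gram']])
  moreover have "mat_eq (2 * g) (\<lambda>i j. V i j - V j i) Jmat" "mat_eq (2 * g) (\<lambda>i j. V' i j - V' j i) Jmat"
    using seif1 seif2 unfolding seifert_matrix_def mat_eq_def by blast+
  ultimately show "symplectic g P" "mat_eq (2*g) V' (mat_mult (2*g) (mat_mult (2*g) P V) (mat_transp P))"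
    using conjugate_seifert_matrix[OF PQ] unfolding symplectic_def mat_mult_eq_mat_mul mat_transp_eq_mat_transpose
    by blast+
qed

end
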